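(* Let $M>0$, $\beta^*>0$, $0<I_0<M$ and $0<S_0<M$ with $S_0+I_0=M$. Let $g$ be the log-normal density \[ g(t)=\frac{1}{t\sigma\sqrt{2\pi}}\exp\!\left(-\frac{(\ln t-\mu)^2}{2\sigma^2}\right)\ (t>0),\qquad g(t)=0\ (t\le 0), \] with $\mu\in\mathbb{R}$, $\sigma>0$. Then the system \[ I'(t)=\beta^*(M-I(t))\Big(I(t)-\int_0^t g(t-s)I(s)\,ds\Big),\qquad S'(t)=-\beta^* S(t)\Big(I(t)-\int_0^t g(t-s)I(s)\,ds\Big), \] with $S(0)=S_0$, $I(0)=I_0$, has a unique $C^1$ solution $(S,I)$ on $[0,\infty)$. Moreover $0<S(t)<M$ and $0<I(t)<M$ for all $t\ge 0$, $S(t)$ decreases to a limit $S_\infty>0$, and $I(t)$ increases to a limit $I_\infty<M$.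
   Context: $M$ denotes the total (constant) population; $\beta^*=\beta/M$ with $0<\beta<1$. *)

theory Defs
  imports "HOL-Analysis.Analysis"
begin

definition lognormal_density :: "real \<Rightarrow> real \<Rightarrow> real \<Rightarrow> real" where
  "lognormal_density \<mu> \<sigma> t =
     (if t > 0 then (1 / (t * \<sigma> * sqrt (2 * pi))) * exp (- ((ln t - \<mu>)^2) / (2 * \<sigma>^2))
      else 0)"

definition force :: "(real \<Rightarrow> real) \<Rightarrow> (real \<Rightarrow> real) \<Rightarrow> real \<Rightarrow> real" where
  "force g I t = I t - integral {0..t} (\<lambda>s. g (t - s) * I s)"

definition is_C1_solution ::
  "real \<Rightarrow> real \<Rightarrow> (real \<Rightarrow> real) \<Rightarrow> real \<Rightarrow> real \<Rightarrow> (real \<Rightarrow> real) \<Rightarrow> (real \<Rightarrow> real) \<Rightarrow> bool" where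
  "is_C1_solution M b g S0 I0 S I \<longleftrightarrow>
     S 0 = S0 \<and> I 0 = I0 \<and>
     (\<exists>S' I'. continuous_on {0..} S' \<and> continuous_on {0..} I' \<and>
        (\<forall>t\<ge>0. (S has_real_derivative S' t) (at t within {0..}) \<and>
                (I has_real_derivative I' t) (at t within {0..}) \<and>
                I' t = b * (M - I t) * force g I t \<and>
                S' t = - b * S t * force g I t))"

end

(* The complement M - I solves the linear equation
   (M - I)' = - b F (M - I), where F = I - g * I (a convolution) is the force of infection,
   and F stays positive because g * I <= I G < I for nondecreasing I, G < 1 being the
   distribution function of g. Inside (0, M) the equation agrees with its truncation to [0, M],
   whose Picard operator is a contraction for a weighted sup norm; this gives existence and
   uniqueness of I, and S = M - I solves the S-equation, which is linear once I is known.
   Finally I increases to a limit below M, since the integral of F over [0, T] is at most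
   M times the mean of g, which is finite for the log-normal law. *)

theory Submission
  imports Defs "HOL-Probability.Distributions"
begin

(* HOL-Probability shadows several Henstock-Kurzweil lemmas (integral_cong, integral_combine,
   integral_diff, ...) by their Lebesgue versions, hence the qualified names below. *)

lemma at_within_atLeast_eq_Icc:
  fixes x :: real
  shows "a \<le> x \<Longrightarrow> x < b \<Longrightarrow> at x within {a..} = at x within {a..b}"
  by (rule at_within_nhd[where S = "{..<b}"]) auto

lemma continuous_on_atLeast_if_Icc:
  fixes f :: "real \<Rightarrow> 'a::topological_space"
  assumes "\<And>b. continuous_on {a..b} f"
  shows "continuous_on {a..} f"
  unfolding continuous_on_eq_continuous_within
proof
  fix x assume "x \<in> {a..}"
  then show "continuous (at x within {a..}) f"
    using assms[of "x + 1"] at_within_atLeast_eq_Icc[of a x "x + 1"]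
    by (simp add: continuous_on_eq_continuous_within)
qed

lemma first_zero_real:
  fixes f :: "real \<Rightarrow> real"
  assumes cont: "continuous_on {a..b} f" and pos: "0 < f a" and t: "t \<in> {a..b}" "f t \<le> 0"
  obtains t1 where "t1 \<in> {a<..b}" "f t1 = 0" "\<And>s. s \<in> {a..<t1} \<Longrightarrow> 0 < f s"
proof -
  define Z where "Z = {a..b} \<inter> f -` {..0}"
  have "closed Z"
    unfolding Z_def by (rule continuous_closed_preimage[OF cont]) auto
  moreover have "Z \<noteq> {}" "bdd_below Z"
    using t by (auto simp: Z_def)
  ultimately have Z: "Inf Z \<in> Z"
    by (rule closed_contains_Inf[rotated -1])
  have before: "0 < f s" if s: "s \<in> {a..<Inf Z}" for s
  proof (rule ccontr)
    assume "\<not> 0 < f s"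
    moreover have "Inf Z \<le> t"
      using t by (intro cInf_lower[OF _ \<open>bdd_below Z\<close>]) (auto simp: Z_def)
    ultimately have "s \<in> Z"
      using s t by (auto simp: Z_def)
    then show False
      using cInf_lower[OF _ \<open>bdd_below Z\<close>, of s] s by auto
  qed
  have "Inf Z \<noteq> a"
    using Z pos by (auto simp: Z_def)
  with Z have "Inf Z \<in> {a<..b}"
    by (auto simp: Z_def)
  moreover have "0 \<le> f (Inf Z)"
  proof (rule continuous_ge_on_closure[of "{a..<Inf Z}" f])
    show "continuous_on (closure {a..<Inf Z}) f" "Inf Z \<in> closure {a..<Inf Z}"
      using \<open>Inf Z \<in> {a<..b}\<close> by (auto intro: continuous_on_subset[OF cont])
  qed (use before in \<open>auto intro: less_imp_le\<close>)
  ultimately show ?thesis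
    using that before Z by (auto simp: Z_def)
qed

lemma mono_on_if_has_real_derivative_nonneg:
  fixes f :: "real \<Rightarrow> real"
  assumes deriv: "\<And>x. x \<in> {a..b} \<Longrightarrow> (f has_real_derivative f' x) (at x within {a..b})"
    and nonneg: "\<And>x. x \<in> {a..b} \<Longrightarrow> 0 \<le> f' x"
  shows "mono_on {a..b} f"
proof (rule mono_onI)
  fix s t assume st: "s \<in> {a..b}" "t \<in> {a..b}" "s \<le> t"
  have "\<exists>x\<in>{s..t}. f t - f s = (\<lambda>h. h * f' x) (t - s)"
  proof (rule mvt_very_simple[OF \<open>s \<le> t\<close>])
    fix x assume "s \<le> x" "x \<le> t"
    with st have "(f has_real_derivative f' x) (at x within {s..t})"
      by (intro DERIV_subset[OF deriv]) auto
    then show "(f has_derivative (\<lambda>h. h * f' x)) (at x within {s..t})"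
      by (simp add: has_field_derivative_def mult_commute_abs)
  qed
  then obtain x where "x \<in> {s..t}" "f t - f s = (t - s) * f' x"
    by auto
  moreover have "0 \<le> f' x"
    using st \<open>x \<in> {s..t}\<close> by (intro nonneg) auto
  ultimately show "f s \<le> f t"
    using \<open>s \<le> t\<close> by (metis diff_ge_0_iff_ge mult_nonneg_nonneg)
qed

lemma linear_ode_explicit:
  fixes y F :: "real \<Rightarrow> real"
  assumes "a \<le> b" and F: "continuous_on {a..b} F"
    and deriv: "\<And>t. t \<in> {a..b} \<Longrightarrow> (y has_real_derivative - F t * y t) (at t within {a..b})"
  shows "y b = y a * exp (- integral {a..b} F)"
proof -
  define h where "h t = y t * exp (integral {a..t} F)" for t
  have "(h has_real_derivative 0) (at t within {a..b})" if "t \<in> {a..b}" for t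
    unfolding h_def
    by (auto intro!: derivative_eq_intros deriv integral_has_real_derivative F that)
  then obtain c where "\<And>t. t \<in> {a..b} \<Longrightarrow> h t = c"
    using has_field_derivative_zero_constant[of "{a..b}" h] by auto
  then have "h b = h a"
    using \<open>a \<le> b\<close> by simp
  then show ?thesis
    by (simp add: h_def exp_minus field_simps)
qed

lemma abs_integral_le_exp_bound:
  fixes f :: "real \<Rightarrow> real"
  assumes "0 < r" "0 \<le> t" "f integrable_on {0..t}"
    and bound: "\<And>s. s \<in> {0..t} \<Longrightarrow> \<bar>f s\<bar> \<le> L * exp (r * s)"
  shows "\<bar>integral {0..t} f\<bar> \<le> L * exp (r * t) / r"
proof -
  have exp_integral: "((\<lambda>s. L * exp (r * s)) has_integral L * exp (r * t) / r - L / r) {0..t}"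
  proof -
    have "((\<lambda>s. L * exp (r * s)) has_integral L * exp (r * t) / r - L * exp (r * 0) / r) {0..t}"
      using assms(1,2)
      by (intro fundamental_theorem_of_calculus)
         (auto intro!: derivative_eq_intros simp: has_real_derivative_iff_has_vector_derivative[symmetric])
    then show ?thesis by simp
  qed
  have "\<bar>f 0\<bar> \<le> L"
    using bound[of 0] \<open>0 \<le> t\<close> by simp
  then have "0 \<le> L"
    by (rule order_trans[OF abs_ge_zero])
  have "norm (integral {0..t} f) \<le> integral {0..t} (\<lambda>s. L * exp (r * s))"
    using bound
    by (intro Henstock_Kurzweil_Integration.integral_norm_bound_integral assms(3)
        has_integral_integrable[OF exp_integral]) simp
  also have "\<dots> = L * exp (r * t) / r - L / r"
    by (rule integral_unique[OF exp_integral])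
  also have "\<dots> \<le> L * exp (r * t) / r"
    using \<open>0 \<le> L\<close> \<open>0 < r\<close> by simp
  finally show ?thesis by simp
qed

lemma abs_diff_mult_le:
  fixes M x y A B P Q :: real
  assumes "\<bar>M - x\<bar> \<le> P" "\<bar>y - B\<bar> \<le> Q"
  shows "\<bar>(M - x) * (x - A) - (M - y) * (y - B)\<bar> \<le> P * (\<bar>x - y\<bar> + \<bar>A - B\<bar>) + Q * \<bar>x - y\<bar>"
proof -
  have "\<bar>(M - x) * ((x - y) - (A - B))\<bar> \<le> P * (\<bar>x - y\<bar> + \<bar>A - B\<bar>)"
    unfolding abs_mult using assms(1) by (intro mult_mono abs_triangle_ineq4) auto
  moreover have "\<bar>(y - x) * (y - B)\<bar> \<le> Q * \<bar>x - y\<bar>"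
    unfolding abs_mult using assms(2) by (subst mult.commute, intro mult_mono) (auto simp: abs_minus_commute)
  moreover have "(M - x) * (x - A) - (M - y) * (y - B) = (M - x) * ((x - y) - (A - B)) + (y - x) * (y - B)"
    by (simp add: algebra_simps)
  ultimately show ?thesis
    by (smt (verit, best) abs_triangle_ineq)
qed

lemma has_integral_inverse_cube:
  fixes t T C :: real
  assumes "0 < t" "t \<le> T"
  shows "((\<lambda>u. C / u ^ 3) has_integral C / (2 * t\<^sup>2) - C / (2 * T\<^sup>2)) {t..T}"
proof -
  have "((\<lambda>u. C / u ^ 3) has_integral - C / (2 * T\<^sup>2) - - C / (2 * t\<^sup>2)) {t..T}"
  proof (rule fundamental_theorem_of_calculus[OF assms(2)])
    fix u assume "u \<in> {t..T}"
    then have "0 < u"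
      using assms(1) by auto
    then show "((\<lambda>u. - C / (2 * u\<^sup>2)) has_vector_derivative C / u ^ 3) (at u within {t..T})"
      unfolding has_real_derivative_iff_has_vector_derivative[symmetric]
      by (auto intro!: derivative_eq_intros simp: power2_eq_square power3_eq_cube field_simps)
  qed
  then show ?thesis
    by simp
qed

lemma has_integral_inverse_square_shift:
  fixes T K :: real
  assumes "0 \<le> T"
  shows "((\<lambda>t. K / (1 + t)\<^sup>2) has_integral K - K / (1 + T)) {0..T}"
proof -
  have "((\<lambda>t. K / (1 + t)\<^sup>2) has_integral (- K / (1 + T)) - (- K / (1 + 0))) {0..T}"
  proof (rule fundamental_theorem_of_calculus[OF assms])
    fix t assume "t \<in> {0..T}"
    then show "((\<lambda>t. - K / (1 + t)) has_vector_derivative K / (1 + t)\<^sup>2) (at t within {0..T})"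
      unfolding has_real_derivative_iff_has_vector_derivative[symmetric]
      by (auto intro!: derivative_eq_intros simp: power2_eq_square field_simps)
  qed
  then show ?thesis
    by simp
qed

lemma mono_on_tendsto_at_top:
  fixes f :: "real \<Rightarrow> real"
  assumes mono: "mono_on {a..} f" and bound: "\<And>t. a \<le> t \<Longrightarrow> f t \<le> B"
  obtains L where "(f \<longlongrightarrow> L) at_top" "L \<le> B"
proof
  have bdd: "bdd_above (f ` {a..})"
    using bound by (intro bdd_aboveI[of _ B]) auto
  show "(f \<longlongrightarrow> Sup (f ` {a..})) at_top"
  proof (rule increasing_tendsto)
    show "\<forall>\<^sub>F t in at_top. f t \<le> Sup (f ` {a..})"
      using eventually_ge_at_top[of a] by eventually_elim (auto intro: cSup_upper[OF _ bdd])
    fix x assume "x < Sup (f ` {a..})"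
    then obtain t0 where "a \<le> t0" "x < f t0"
      by (subst (asm) less_cSup_iff[OF _ bdd]) auto
    then have "x < f t" if "t0 \<le> t" for t
      using mono_onD[OF mono, of t0 t] that by auto
    then show "\<forall>\<^sub>F t in at_top. x < f t"
      by (auto simp: eventually_at_top_linorder)
  qed
  show "Sup (f ` {a..}) \<le> B"
    using bound by (intro cSup_least) auto
qed

lemma integral_reflect_Icc:
  fixes f :: "real \<Rightarrow> 'a::euclidean_space"
  shows "integral {0..T} (\<lambda>s. f (T - s)) = integral {0..T} f"
proof -
  have "integral {0..T} (\<lambda>s. f (T - s)) = integral {- T..0} (\<lambda>x. f (x + T))"
    using Henstock_Kurzweil_Integration.integral_reflect_real[where a = "- T" and b = 0
        and f = "\<lambda>x. f (x + T)"]
    by simp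
  also have "\<dots> = integral {0..T} f"
    using integral_shift_real_ivl[where f = f and a = 0 and b = T and c = T] by simp
  finally show ?thesis .
qed

section \<open>Fixed points of weighted contractions\<close>

locale weighted_contraction =
  fixes P :: "(real \<Rightarrow> real) \<Rightarrow> real \<Rightarrow> real" and r k :: real
  assumes factor_nonneg: "0 \<le> k" and factor_less_1: "k < 1"
    and continuous_on_image: "continuous_on {0..} v \<Longrightarrow> continuous_on {0..} (P v)"
    and exp_growth: "continuous_on {0..} v \<Longrightarrow> \<exists>C. \<forall>t\<ge>0. \<bar>P v t\<bar> \<le> C * exp (r * t)"
    and contraction: "continuous_on {0..} v \<Longrightarrow> continuous_on {0..} w \<Longrightarrow> 0 \<le> t \<Longrightarrow>
      (\<And>s. s \<in> {0..t} \<Longrightarrow> \<bar>v s - w s\<bar> \<le> D * exp (r * s)) \<Longrightarrow>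
      \<bar>P v t - P w t\<bar> \<le> k * D * exp (r * t)"
begin

lemma image_cong:
  assumes "continuous_on {0..} v" "continuous_on {0..} w" "0 \<le> t"
    and "\<And>s. s \<in> {0..t} \<Longrightarrow> v s = w s"
  shows "P v t = P w t"
  using contraction[OF assms(1-3), of 0] assms(4) by simp

text \<open>The weighted norm \<open>sup\<close> of \<open>exp (- r * t) * \<bar>v t\<bar>\<close> over \<open>t \<ge> 0\<close> becomes the sup norm of
  \<open>real \<Rightarrow>\<^sub>C real\<close>: \<open>damp v\<close> is extended constantly to negative times, and \<open>undamp\<close> inverts
  \<open>damp\<close> on \<open>{0..}\<close>.\<close>

definition damp :: "(real \<Rightarrow> real) \<Rightarrow> real \<Rightarrow> real" where
  "damp v t = exp (- r * max t 0) * v (max t 0)"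

definition undamp :: "(real \<Rightarrow>\<^sub>C real) \<Rightarrow> real \<Rightarrow> real" where
  "undamp u t = exp (r * t) * apply_bcontfun u t"

definition weighted_map :: "(real \<Rightarrow>\<^sub>C real) \<Rightarrow> real \<Rightarrow>\<^sub>C real" where
  "weighted_map u = Bcontfun (damp (P (undamp u)))"

lemma damp_bcontfun:
  assumes v: "continuous_on {0..} v" and growth: "\<And>t. 0 \<le> t \<Longrightarrow> \<bar>v t\<bar> \<le> C * exp (r * t)"
  shows "damp v \<in> bcontfun"
proof (rule bcontfun_normI)
  show "continuous_on UNIV (damp v)"
    unfolding damp_def by (intro continuous_intros continuous_on_compose2[OF v]) auto
  show "norm (damp v t) \<le> C" for t
    using growth[of "max t 0"] by (simp add: damp_def abs_mult exp_minus field_simps)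
qed

lemma continuous_on_undamp: "continuous_on S (undamp u)"
  unfolding undamp_def by (intro continuous_intros continuous_on_apply_bcontfun)

lemma weighted_map_apply: "apply_bcontfun (weighted_map u) t = damp (P (undamp u)) t"
proof -
  obtain C where "\<forall>t\<ge>0. \<bar>P (undamp u) t\<bar> \<le> C * exp (r * t)"
    using exp_growth[OF continuous_on_undamp] by blast
  then have "damp (P (undamp u)) \<in> bcontfun"
    by (intro damp_bcontfun continuous_on_image continuous_on_undamp) auto
  then show ?thesis
    unfolding weighted_map_def by (simp add: Bcontfun_inverse)
qed

lemma weighted_map_contraction: "dist (weighted_map u) (weighted_map w) \<le> k * dist u w"
proof (rule dist_bound)
  fix t :: real
  define t' where "t' = max t 0"
  have "\<bar>undamp u s - undamp w s\<bar> \<le> dist u w * exp (r * s)" for s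
  proof -
    have "\<bar>undamp u s - undamp w s\<bar> = exp (r * s) * \<bar>u s - w s\<bar>"
      by (simp add: undamp_def abs_mult flip: right_diff_distrib)
    also have "\<dots> \<le> exp (r * s) * dist u w"
      using dist_bounded[of u s w] by (simp add: dist_real_def)
    finally show ?thesis
      by (simp add: mult.commute)
  qed
  then have "\<bar>P (undamp u) t' - P (undamp w) t'\<bar> \<le> k * dist u w * exp (r * t')"
    by (intro contraction continuous_on_undamp) (auto simp: t'_def)
  then have "exp (- r * t') * \<bar>P (undamp u) t' - P (undamp w) t'\<bar> \<le> k * dist u w"
    by (simp add: exp_minus field_simps)
  then show "dist (weighted_map u t) (weighted_map w t) \<le> k * dist u w"
    by (simp add: weighted_map_apply damp_def dist_real_def abs_mult t'_def flip: right_diff_distrib)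
qed

lemma fixed_point_exists: "\<exists>v. continuous_on {0..} v \<and> (\<forall>t\<ge>0. P v t = v t)"
proof -
  obtain u where u: "weighted_map u = u"
    using banach_fix_type[OF factor_nonneg factor_less_1] weighted_map_contraction by blast
  have "P (undamp u) t = undamp u t" if "0 \<le> t" for t
    using arg_cong[OF u, of "\<lambda>u. apply_bcontfun u t"] that
    by (simp add: weighted_map_apply damp_def undamp_def exp_minus field_simps)
  then show ?thesis
    using continuous_on_undamp by blast
qed

lemma weighted_map_fixed:
  assumes "continuous_on {0..} v" "\<And>t. 0 \<le> t \<Longrightarrow> P v t = v t"
    "\<And>t. 0 \<le> t \<Longrightarrow> \<bar>v t\<bar> \<le> C * exp (r * t)"
  shows "weighted_map (Bcontfun (damp v)) = Bcontfun (damp v)"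
proof (rule bcontfun_eqI)
  have apply_damp: "apply_bcontfun (Bcontfun (damp v)) = damp v"
    using damp_bcontfun[OF assms(1,3)] by (simp add: Bcontfun_inverse)
  have "P (undamp (Bcontfun (damp v))) s = v s" if "0 \<le> s" for s
    using image_cong[OF continuous_on_undamp assms(1) that] assms(2)[OF that]
    by (simp add: apply_damp undamp_def damp_def exp_minus)
  then show "weighted_map (Bcontfun (damp v)) t = Bcontfun (damp v) t" for t
    by (simp add: weighted_map_apply apply_damp damp_def)
qed

lemma fixed_point_unique:
  assumes v: "continuous_on {0..} v" "\<And>t. 0 \<le> t \<Longrightarrow> P v t = v t"
      "\<And>t. 0 \<le> t \<Longrightarrow> \<bar>v t\<bar> \<le> C * exp (r * t)"
    and w: "continuous_on {0..} w" "\<And>t. 0 \<le> t \<Longrightarrow> P w t = w t"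
      "\<And>t. 0 \<le> t \<Longrightarrow> \<bar>w t\<bar> \<le> C * exp (r * t)"
    and "0 \<le> t"
  shows "v t = w t"
proof -
  define d where "d = dist (Bcontfun (damp v)) (Bcontfun (damp w))"
  have "d \<le> k * d"
    unfolding d_def using weighted_map_contraction[of "Bcontfun (damp v)" "Bcontfun (damp w)"]
    by (simp only: weighted_map_fixed[OF v] weighted_map_fixed[OF w])
  then have "(1 - k) * d \<le> 0"
    by (simp add: algebra_simps)
  then have "d = 0"
    using factor_less_1 zero_le_dist[of "Bcontfun (damp v)" "Bcontfun (damp w)"]
    by (simp add: d_def mult_le_0_iff)
  then have "damp v t = damp w t"
    using damp_bcontfun[OF v(1,3)] damp_bcontfun[OF w(1,3)] by (metis Bcontfun_inverse d_def dist_eq_0_iff)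
  then show ?thesis
    using \<open>0 \<le> t\<close> by (simp add: damp_def)
qed

end

section \<open>Memory kernels\<close>

locale memory_kernel =
  fixes g :: "real \<Rightarrow> real"
  assumes continuous_kernel: "continuous_on UNIV g"
    and kernel_nonneg: "0 \<le> g t"
    and kernel_vanishes: "t \<le> 0 \<Longrightarrow> g t = 0"
    and kernel_mass_less_1: "0 \<le> t \<Longrightarrow> integral {0..t} g < 1"
    and kernel_finite_mean: "\<exists>K. \<forall>T\<ge>0. integral {0..T} (\<lambda>t. 1 - integral {0..t} g) \<le> K"
begin

definition cdf :: "real \<Rightarrow> real" where
  "cdf t = integral {0..t} g"

definition conv :: "(real \<Rightarrow> real) \<Rightarrow> real \<Rightarrow> real" where
  "conv h t = integral {0..t} (\<lambda>s. g (t - s) * h s)"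

lemma force_eq_conv: "force g h t = h t - conv h t"
  by (simp add: force_def conv_def)

lemma continuous_on_kernel_comp [continuous_intros]:
  "continuous_on S f \<Longrightarrow> continuous_on S (\<lambda>x. g (f x))"
  by (rule continuous_on_compose2[OF continuous_kernel _ subset_UNIV])

lemma integrable_kernel: "g integrable_on {a..b}"
  by (intro integrable_continuous_interval continuous_on_subset[OF continuous_kernel]) simp

lemma cdf_less_1: "0 \<le> t \<Longrightarrow> cdf t < 1"
  unfolding cdf_def by (rule kernel_mass_less_1)

lemma cdf_le_1: "0 \<le> t \<Longrightarrow> cdf t \<le> 1"
  using cdf_less_1 by fastforce

lemma continuous_on_cdf: "continuous_on {0..T} cdf"
  unfolding cdf_def by (rule indefinite_integral_continuous_1[OF integrable_kernel])

lemma integral_kernel_reflect: "integral {0..t} (\<lambda>s. g (t - s)) = cdf t"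
  unfolding cdf_def by (rule integral_reflect_Icc)

lemma integral_kernel_shift:
  assumes "0 \<le> r" "r \<le> T"
  shows "integral {0..T} (\<lambda>s. g (s - r)) = cdf (T - r)"
proof -
  have "integral {0..T} (\<lambda>s. g (s - r)) = integral {- r..T - r} g"
    using integral_shift_real_ivl[where f = g and a = "- r" and b = "T - r" and c = "- r"] by simp
  also have "\<dots> = integral {- r..0} g + cdf (T - r)"
    unfolding cdf_def using assms
    by (intro Henstock_Kurzweil_Integration.integral_combine[symmetric] integrable_kernel) auto
  also have "integral {- r..0} g = 0"
    by (subst Henstock_Kurzweil_Integration.integral_cong[of _ _ "\<lambda>_. 0"]) (auto simp: kernel_vanishes)
  finally show ?thesis by simp
qed

lemma integrable_conv_integrand:
  "continuous_on {0..T} h \<Longrightarrow> (\<lambda>s. g (t - s) * h s) integrable_on {0..T}"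
  by (intro integrable_continuous_interval continuous_intros)

lemma conv_eq_integral_Icc:
  assumes h: "continuous_on {0..T} h" and t: "0 \<le> t" "t \<le> T"
  shows "conv h t = integral {0..T} (\<lambda>s. g (t - s) * h s)"
proof -
  have "integral {0..T} (\<lambda>s. g (t - s) * h s)
      = conv h t + integral {t..T} (\<lambda>s. g (t - s) * h s)"
    unfolding conv_def using t
    by (intro Henstock_Kurzweil_Integration.integral_combine[symmetric] integrable_conv_integrand h)
  also have "integral {t..T} (\<lambda>s. g (t - s) * h s) = 0"
    by (subst Henstock_Kurzweil_Integration.integral_cong[of _ _ "\<lambda>_. 0"]) (auto simp: kernel_vanishes)
  finally show ?thesis by simp
qed

lemma continuous_on_conv:
  assumes h: "continuous_on {0..T} h"
  shows "continuous_on {0..T} (conv h)"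
proof -
  have "continuous_on ({0..T} \<times> cbox 0 T) (\<lambda>(t, s). g (t - s) * h s)"
    unfolding case_prod_beta by (intro continuous_intros continuous_on_compose2[OF h]) auto
  then have "continuous_on {0..T} (\<lambda>t. integral (cbox 0 T) (\<lambda>s. g (t - s) * h s))"
    by (rule integral_continuous_on_param)
  then show ?thesis
    by (rule continuous_on_eq) (simp add: conv_eq_integral_Icc[OF h])
qed

lemma continuous_on_force: "continuous_on {0..T} h \<Longrightarrow> continuous_on {0..T} (force g h)"
  unfolding force_eq_conv[abs_def] by (intro continuous_intros continuous_on_conv)

lemma continuous_on_force_atLeast:
  assumes "continuous_on {0..} h"
  shows "continuous_on {0..} (force g h)"
  by (intro continuous_on_atLeast_if_Icc continuous_on_force continuous_on_subset[OF assms]) auto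

lemma conv_0 [simp]: "conv h 0 = 0"
  by (simp add: conv_def)

lemma force_cong:
  "0 \<le> t \<Longrightarrow> (\<And>s. s \<in> {0..t} \<Longrightarrow> v s = w s) \<Longrightarrow> force g v t = force g w t"
  unfolding force_def by (auto intro!: Henstock_Kurzweil_Integration.integral_cong)

lemma abs_conv_le:
  assumes h: "continuous_on {0..t} h" and bound: "\<And>s. s \<in> {0..t} \<Longrightarrow> \<bar>h s\<bar> \<le> H"
  shows "\<bar>conv h t\<bar> \<le> H * cdf t"
proof -
  have "norm (conv h t) \<le> integral {0..t} (\<lambda>s. H * g (t - s))"
    unfolding conv_def
  proof (rule Henstock_Kurzweil_Integration.integral_norm_bound_integral[OF integrable_conv_integrand[OF h]])
    show "(\<lambda>s. H * g (t - s)) integrable_on {0..t}"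
      by (intro integrable_continuous_interval continuous_intros)
    show "norm (g (t - s) * h s) \<le> H * g (t - s)" if "s \<in> {0..t}" for s
      using mult_left_mono[OF bound[OF that] kernel_nonneg[of "t - s"]]
      by (simp add: abs_mult mult.commute kernel_nonneg)
  qed
  then show ?thesis
    by (simp add: integral_kernel_reflect)
qed

lemma conv_nonneg:
  assumes h: "continuous_on {0..t} h" and "\<And>s. s \<in> {0..t} \<Longrightarrow> 0 \<le> h s"
  shows "0 \<le> conv h t"
  unfolding conv_def
  by (intro Henstock_Kurzweil_Integration.integral_nonneg integrable_conv_integrand[OF h]
      mult_nonneg_nonneg kernel_nonneg assms)

lemma conv_diff:
  "continuous_on {0..t} v \<Longrightarrow> continuous_on {0..t} w \<Longrightarrow>
    conv v t - conv w t = conv (\<lambda>s. v s - w s) t"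
  unfolding conv_def
  by (simp add: Henstock_Kurzweil_Integration.integral_diff[symmetric] integrable_conv_integrand
      right_diff_distrib)

lemma integral_conv:
  assumes "0 \<le> T" and h: "continuous_on {0..T} h"
  shows "integral {0..T} (conv h) = integral {0..T} (\<lambda>s. cdf (T - s) * h s)"
proof -
  have "integral {0..T} (conv h) = integral (cbox 0 T) (\<lambda>t. integral (cbox 0 T) (\<lambda>s. g (t - s) * h s))"
    by (auto intro!: Henstock_Kurzweil_Integration.integral_cong simp: conv_eq_integral_Icc[OF h])
  also have "\<dots> = integral (cbox 0 T) (\<lambda>s. integral (cbox 0 T) (\<lambda>t. g (t - s) * h s))"
  proof (rule integral_swap_continuous)
    have "continuous_on (cbox (0, 0) (T, T)) (\<lambda>p. h (snd p))"
      by (rule continuous_on_compose2[OF h]) (auto intro: continuous_intros simp: cbox_Pair_eq)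
    then show "continuous_on (cbox (0, 0) (T, T)) (\<lambda>(t, s). g (t - s) * h s)"
      unfolding case_prod_beta by (intro continuous_intros)
  qed
  also have "\<dots> = integral {0..T} (\<lambda>s. cdf (T - s) * h s)"
    by (auto intro!: Henstock_Kurzweil_Integration.integral_cong simp: integral_kernel_shift)
  finally show ?thesis .
qed

lemma integral_force_le:
  assumes "0 \<le> T" and h: "continuous_on {0..T} h"
    and bound: "\<And>s. s \<in> {0..T} \<Longrightarrow> 0 \<le> h s \<and> h s \<le> H"
  shows "integral {0..T} (force g h) \<le> H * integral {0..T} (\<lambda>t. 1 - cdf t)"
proof -
  have cdf_shift: "continuous_on {0..T} (\<lambda>s. cdf (T - s))"
    by (intro continuous_on_compose2[OF continuous_on_cdf[of T]] continuous_intros) auto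
  have "integral {0..T} (force g h) = integral {0..T} h - integral {0..T} (conv h)"
    unfolding force_eq_conv[abs_def]
    by (intro Henstock_Kurzweil_Integration.integral_diff integrable_continuous_interval continuous_on_conv h)
  also have "\<dots> = integral {0..T} (\<lambda>s. (1 - cdf (T - s)) * h s)"
    unfolding integral_conv[OF assms(1,2)] left_diff_distrib mult_1
    by (intro Henstock_Kurzweil_Integration.integral_diff[symmetric] integrable_continuous_interval
        continuous_intros h cdf_shift)
  also have "\<dots> \<le> integral {0..T} (\<lambda>s. H * (1 - cdf (T - s)))"
  proof (intro integral_le integrable_continuous_interval continuous_intros h cdf_shift)
    fix s assume s: "s \<in> {0..T}"
    then have "h s * (1 - cdf (T - s)) \<le> H * (1 - cdf (T - s))"
      using bound[OF s] cdf_le_1[of "T - s"] by (intro mult_right_mono) auto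
    then show "(1 - cdf (T - s)) * h s \<le> H * (1 - cdf (T - s))"
      by (simp add: mult.commute)
  qed
  also have "\<dots> = H * integral {0..T} (\<lambda>t. 1 - cdf t)"
    using integral_reflect_Icc[where f = "\<lambda>t. 1 - cdf t" and T = T] by simp
  finally show ?thesis .
qed

end

section \<open>The log-normal kernel\<close>

lemma lognormal_density_eq_0: "t \<le> 0 \<Longrightarrow> lognormal_density \<mu> \<sigma> t = 0"
  by (simp add: lognormal_density_def)

context
  fixes \<mu> \<sigma> :: real
  assumes \<sigma>_pos: "0 < \<sigma>"
begin

lemma lognormal_density_nonneg: "0 \<le> lognormal_density \<mu> \<sigma> t"
  using \<sigma>_pos by (simp add: lognormal_density_def)

lemma lognormal_density_pos: "0 < t \<Longrightarrow> 0 < lognormal_density \<mu> \<sigma> t"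
  using \<sigma>_pos by (simp add: lognormal_density_def)

text \<open>Completing the square in the exponent, \<open>a y - (y - \<mu>)\<^sup>2 / (2 \<sigma>\<^sup>2)\<close> is maximal at
  \<open>y = \<mu> + a \<sigma>\<^sup>2\<close>; here \<open>y = ln t\<close>.\<close>
lemma lognormal_density_powr_le:
  assumes "0 < t"
  shows "t powr a * lognormal_density \<mu> \<sigma> t
    \<le> exp ((a - 1) * \<mu> + (a - 1)\<^sup>2 * \<sigma>\<^sup>2 / 2) / (\<sigma> * sqrt (2 * pi))"
proof -
  have square: "k * y - (y - \<mu>)\<^sup>2 / (2 * \<sigma>\<^sup>2) \<le> k * \<mu> + k\<^sup>2 * \<sigma>\<^sup>2 / 2" for k y
  proof -
    have "(k * \<mu> + k\<^sup>2 * \<sigma>\<^sup>2 / 2) - (k * y - (y - \<mu>)\<^sup>2 / (2 * \<sigma>\<^sup>2))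
        = (y - \<mu> - k * \<sigma>\<^sup>2)\<^sup>2 / (2 * \<sigma>\<^sup>2)"
      using \<sigma>_pos by (simp add: divide_simps power2_eq_square) (simp add: algebra_simps)
    then show ?thesis
      by (smt (verit) divide_nonneg_pos zero_le_power2 \<sigma>_pos zero_less_power)
  qed
  have inv: "1 / t = exp (- ln t)"
    using assms by (simp add: exp_minus inverse_eq_divide)
  have "t powr a * lognormal_density \<mu> \<sigma> t
      = exp (a * ln t) * exp (- ln t) * exp (- (ln t - \<mu>)\<^sup>2 / (2 * \<sigma>\<^sup>2)) / (\<sigma> * sqrt (2 * pi))"
    using assms \<sigma>_pos by (simp add: lognormal_density_def powr_def inv[symmetric] field_simps)
  also have "\<dots> = exp ((a - 1) * ln t - (ln t - \<mu>)\<^sup>2 / (2 * \<sigma>\<^sup>2)) / (\<sigma> * sqrt (2 * pi))"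
    by (simp add: exp_add[symmetric] exp_diff algebra_simps)
  also have "\<dots> \<le> exp ((a - 1) * \<mu> + (a - 1)\<^sup>2 * \<sigma>\<^sup>2 / 2) / (\<sigma> * sqrt (2 * pi))"
    using \<sigma>_pos square[of "a - 1" "ln t"] by (intro divide_right_mono) auto
  finally show ?thesis .
qed

lemma lognormal_density_le_linear: "\<exists>C. \<forall>x. lognormal_density \<mu> \<sigma> x \<le> C * \<bar>x\<bar>"
proof (intro exI allI)
  define C where "C = exp ((-1 - 1) * \<mu> + (-1 - 1)\<^sup>2 * \<sigma>\<^sup>2 / 2) / (\<sigma> * sqrt (2 * pi))"
  fix x :: real
  show "lognormal_density \<mu> \<sigma> x \<le> C * \<bar>x\<bar>"
  proof (cases "0 < x")
    case True
    have "x powr (-1) * lognormal_density \<mu> \<sigma> x \<le> C"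
      using lognormal_density_powr_le[OF True, of "-1"] by (simp add: C_def)
    then have "lognormal_density \<mu> \<sigma> x / x \<le> C"
      using True by (simp add: powr_minus divide_inverse mult.commute)
    then show ?thesis
      using True by (simp add: divide_le_eq mult.commute)
  next
    case False
    have "0 \<le> C"
      using \<sigma>_pos by (simp add: C_def)
    then show ?thesis
      using False by (simp add: lognormal_density_eq_0 mult_nonneg_nonpos)
  qed
qed

lemma continuous_lognormal_density: "continuous_on UNIV (lognormal_density \<mu> \<sigma>)"
proof -
  have "isCont (lognormal_density \<mu> \<sigma>) t" for t
  proof (cases t "0 :: real" rule: linorder_cases)
    case greater
    have "continuous_on {0<..} (\<lambda>t. 1 / (t * \<sigma> * sqrt (2 * pi)) * exp (- (ln t - \<mu>)\<^sup>2 / (2 * \<sigma>\<^sup>2)))"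
      using \<sigma>_pos by (intro continuous_intros) auto
    then have "continuous_on {0<..} (lognormal_density \<mu> \<sigma>)"
      by (rule continuous_on_eq) (simp add: lognormal_density_def)
    then show ?thesis
      using greater by (simp add: continuous_on_eq_continuous_at)
  next
    case less
    have "continuous_on {..<0} (lognormal_density \<mu> \<sigma>)"
      by (rule continuous_on_eq[of _ "\<lambda>_. 0"]) (auto simp: lognormal_density_eq_0)
    then show ?thesis
      using less by (simp add: continuous_on_eq_continuous_at)
  next
    case equal
    obtain C where bound: "\<And>x. lognormal_density \<mu> \<sigma> x \<le> C * \<bar>x\<bar>"
      using lognormal_density_le_linear by blast
    have "((\<lambda>x. C * \<bar>x\<bar>) \<longlongrightarrow> C * \<bar>0\<bar>) (at 0)"
      by (intro tendsto_intros)
    then have "((\<lambda>x. C * \<bar>x\<bar>) \<longlongrightarrow> 0) (at 0)"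
      by simp
    then have "(lognormal_density \<mu> \<sigma> \<longlongrightarrow> 0) (at 0)"
      by (rule Lim_null_comparison[rotated]) (auto simp: lognormal_density_nonneg bound)
    then show ?thesis
      using equal by (simp add: isCont_def lognormal_density_eq_0)
  qed
  then show ?thesis
    by (simp add: continuous_at_imp_continuous_on)
qed

lemma integrable_lognormal_density: "lognormal_density \<mu> \<sigma> integrable_on {a..b}"
  by (intro integrable_continuous_interval continuous_on_subset[OF continuous_lognormal_density]) simp

lemma integral_lognormal_density_split:
  "0 \<le> u \<Longrightarrow> u \<le> t \<Longrightarrow> integral {0..t} (lognormal_density \<mu> \<sigma>)
    = integral {0..u} (lognormal_density \<mu> \<sigma>) + integral {u..t} (lognormal_density \<mu> \<sigma>)"
  by (intro Henstock_Kurzweil_Integration.integral_combine[symmetric] integrable_lognormal_density)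

lemma integral_lognormal_density_nonneg: "0 \<le> integral {u..t} (lognormal_density \<mu> \<sigma>)"
  by (intro Henstock_Kurzweil_Integration.integral_nonneg integrable_lognormal_density
      lognormal_density_nonneg)

lemma integral_lognormal_density_ln:
  assumes "0 < u" "u \<le> t"
  shows "integral {u..t} (lognormal_density \<mu> \<sigma>) = integral {ln u..ln t} (normal_density \<mu> \<sigma>)"
proof -
  have "((\<lambda>x. (1 / x) *\<^sub>R normal_density \<mu> \<sigma> (ln x)) has_integral
      integral {ln u..ln t} (normal_density \<mu> \<sigma>)) {u..t}"
  proof (rule has_integral_substitution[of u t ln "ln u" "ln t"])
    show "continuous_on {ln u..ln t} (normal_density \<mu> \<sigma>)"
      unfolding normal_density_def using \<sigma>_pos by (intro continuous_intros) auto
    show "(ln has_real_derivative 1 / x) (at x within {u..t})" if "x \<in> {u..t}" for x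
      using that assms by (auto intro!: derivative_eq_intros)
  qed (use assms in \<open>auto intro!: continuous_intros\<close>)
  moreover have "(1 / x) *\<^sub>R normal_density \<mu> \<sigma> (ln x) = lognormal_density \<mu> \<sigma> x"
    if "x \<in> {u..t}" for x
  proof -
    have "sqrt (2 * pi * \<sigma>\<^sup>2) = \<sigma> * sqrt (2 * pi)"
      using \<sigma>_pos by (simp add: real_sqrt_mult)
    then show ?thesis
      using that assms \<sigma>_pos by (simp add: normal_density_def lognormal_density_def)
  qed
  ultimately show ?thesis
    by (intro integral_unique) (rule has_integral_eq[rotated])
qed

lemma normal_density_has_integral_1: "(normal_density \<mu> \<sigma> has_integral 1) UNIV"
  using has_integral_integral_lborel[OF integrable_normal_density] \<sigma>_pos by simp

lemma integral_normal_density_le_1: "integral {a..b} (normal_density \<mu> \<sigma>) \<le> 1"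
proof -
  have "continuous_on UNIV (normal_density \<mu> \<sigma>)"
    unfolding normal_density_def using \<sigma>_pos by (intro continuous_intros) auto
  then have "integral {a..b} (normal_density \<mu> \<sigma>) \<le> integral UNIV (normal_density \<mu> \<sigma>)"
    using normal_density_has_integral_1
    by (intro integral_subset_le) (auto intro: integrable_continuous_interval continuous_on_subset)
  then show ?thesis
    using integral_unique[OF normal_density_has_integral_1] by simp
qed

lemma lognormal_cdf_le_1: "integral {0..t} (lognormal_density \<mu> \<sigma>) \<le> 1"
proof (cases "0 < t")
  case True
  show ?thesis
  proof (rule field_le_epsilon)
    fix e :: real assume "0 < e"
    have "continuous_on {0..t} (\<lambda>u. integral {0..u} (lognormal_density \<mu> \<sigma>))"
      by (rule indefinite_integral_continuous_1[OF integrable_lognormal_density])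
    moreover have "0 \<in> {0..t}"
      using \<open>0 < t\<close> by simp
    ultimately obtain d where "0 < d" and d: "\<And>u. u \<in> {0..t} \<Longrightarrow> dist u 0 < d \<Longrightarrow>
        dist (integral {0..u} (lognormal_density \<mu> \<sigma>)) (integral {0..0} (lognormal_density \<mu> \<sigma>)) < e"
      using \<open>0 < e\<close> unfolding continuous_on_iff by blast
    define u where "u = min t (d / 2)"
    have u: "0 < u" "u \<le> t" "dist u 0 < d"
      using \<open>0 < d\<close> \<open>0 < t\<close> by (auto simp: u_def)
    have "integral {0..t} (lognormal_density \<mu> \<sigma>)
        = integral {0..u} (lognormal_density \<mu> \<sigma>) + integral {ln u..ln t} (normal_density \<mu> \<sigma>)"
      using u by (simp add: integral_lognormal_density_split[of u t] integral_lognormal_density_ln)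
    also have "\<dots> \<le> e + 1"
      using d[of u] u integral_normal_density_le_1 by (intro add_mono) (auto simp: dist_real_def)
    finally show "integral {0..t} (lognormal_density \<mu> \<sigma>) \<le> 1 + e"
      by simp
  qed
next
  case False
  then have "integral {0..t} (lognormal_density \<mu> \<sigma>) = 0"
    by (cases "t = 0") auto
  then show ?thesis
    by simp
qed

lemma lognormal_cdf_tendsto_1: "((\<lambda>t. integral {0..t} (lognormal_density \<mu> \<sigma>)) \<longlongrightarrow> 1) at_top"
proof (rule increasing_tendsto)
  show "\<forall>\<^sub>F t in at_top. integral {0..t} (lognormal_density \<mu> \<sigma>) \<le> 1"
    by (simp add: lognormal_cdf_le_1)
  fix x :: real assume "x < 1"
  then have "0 < 1 - x"
    by simp
  moreover have "\<forall>e>0. \<exists>B>0. \<forall>a b. ball 0 B \<subseteq> cbox a b \<longrightarrow>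
      norm (integral (cbox a b) (normal_density \<mu> \<sigma>) - 1) < e"
    using normal_density_has_integral_1 unfolding has_integral_alt'[of _ 1 UNIV] by simp
  ultimately obtain B where "0 < B"
    and B: "\<And>a b. ball 0 B \<subseteq> cbox a b \<Longrightarrow>
      norm (integral (cbox a b) (normal_density \<mu> \<sigma>) - 1) < 1 - x"
    by meson
  have "x < integral {0..T} (lognormal_density \<mu> \<sigma>)" if "exp B \<le> T" for T
  proof -
    have T: "0 < exp (- B)" "exp (- B) \<le> T"
      using that \<open>0 < B\<close> by (auto intro: order_trans[of _ "exp B"])
    have "B \<le> ln T"
      using that by (metis exp_gt_zero exp_le_cancel_iff exp_ln order_less_le_trans)
    have "ball 0 B \<subseteq> cbox (- B) (ln T)"
      using \<open>B \<le> ln T\<close> by (auto simp: dist_real_def)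
    then have "x < integral {- B..ln T} (normal_density \<mu> \<sigma>)"
      using B[of "- B" "ln T"] by auto
    also have "\<dots> = integral {exp (- B)..T} (lognormal_density \<mu> \<sigma>)"
      using integral_lognormal_density_ln[OF T(1,2)] by simp
    also have "\<dots> \<le> integral {0..T} (lognormal_density \<mu> \<sigma>)"
      using integral_lognormal_density_split[of "exp (- B)" T] T
        integral_lognormal_density_nonneg[of 0 "exp (- B)"] by simp
    finally show ?thesis .
  qed
  then show "\<forall>\<^sub>F t in at_top. x < integral {0..t} (lognormal_density \<mu> \<sigma>)"
    by (auto simp: eventually_at_top_linorder)
qed

lemma integral_lognormal_density_pos:
  assumes "0 \<le> t"
  shows "0 < integral {t..t + 1} (lognormal_density \<mu> \<sigma>)"
proof -
  have "continuous_on {t + 1/2..t + 1} (lognormal_density \<mu> \<sigma>)"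
    by (rule continuous_on_subset[OF continuous_lognormal_density]) simp
  then obtain x where x: "x \<in> {t + 1/2..t + 1}"
    and min: "\<And>y. y \<in> {t + 1/2..t + 1} \<Longrightarrow> lognormal_density \<mu> \<sigma> x \<le> lognormal_density \<mu> \<sigma> y"
    using continuous_attains_inf[of "{t + 1/2..t + 1}" "lognormal_density \<mu> \<sigma>"] by auto
  have "0 < integral {t + 1/2..t + 1} (\<lambda>_. lognormal_density \<mu> \<sigma> x)"
    using x assms lognormal_density_pos[of x] by simp
  also have "\<dots> \<le> integral {t + 1/2..t + 1} (lognormal_density \<mu> \<sigma>)"
    using min by (intro integral_le integrable_lognormal_density) auto
  also have "\<dots> \<le> integral {t..t + 1} (lognormal_density \<mu> \<sigma>)"
    by (intro integral_subset_le integrable_lognormal_density) (auto simp: lognormal_density_nonneg)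
  finally show ?thesis .
qed

lemma lognormal_cdf_less_1:
  assumes "0 \<le> t"
  shows "integral {0..t} (lognormal_density \<mu> \<sigma>) < 1"
  using integral_lognormal_density_split[of t "t + 1"] integral_lognormal_density_pos[OF assms]
    lognormal_cdf_le_1[of "t + 1"] assms by simp

lemma lognormal_tail_le: "\<exists>C. \<forall>t>0. 1 - integral {0..t} (lognormal_density \<mu> \<sigma>) \<le> C / t\<^sup>2"
proof -
  define C where "C = exp ((3 - 1) * \<mu> + (3 - 1)\<^sup>2 * \<sigma>\<^sup>2 / 2) / (\<sigma> * sqrt (2 * pi))"
  have cube: "lognormal_density \<mu> \<sigma> u \<le> C / u ^ 3" if "0 < u" for u
  proof -
    have "u powr 3 * lognormal_density \<mu> \<sigma> u \<le> C"
      using lognormal_density_powr_le[OF that, of 3] by (simp add: C_def)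
    then show ?thesis
      using that by (simp add: powr_realpow le_divide_eq mult.commute)
  qed
  have "1 - integral {0..t} (lognormal_density \<mu> \<sigma>) \<le> C / (2 * t\<^sup>2)" if "0 < t" for t
  proof -
    have tail: "integral {0..T} (lognormal_density \<mu> \<sigma>) - integral {0..t} (lognormal_density \<mu> \<sigma>)
        \<le> C / (2 * t\<^sup>2)" if "t \<le> T" for T
    proof -
      note inverse_cube = has_integral_inverse_cube[OF \<open>0 < t\<close> that, of C]
      have "integral {t..T} (lognormal_density \<mu> \<sigma>) \<le> integral {t..T} (\<lambda>u. C / u ^ 3)"
        using cube \<open>0 < t\<close>
        by (intro integral_le integrable_lognormal_density has_integral_integrable[OF inverse_cube]) auto
      also have "\<dots> \<le> C / (2 * t\<^sup>2)"
        using integral_unique[OF inverse_cube] \<sigma>_pos by (simp add: C_def)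
      finally show ?thesis
        using integral_lognormal_density_split[of t T] \<open>0 < t\<close> that by simp
    qed
    have "((\<lambda>T. integral {0..T} (lognormal_density \<mu> \<sigma>) - integral {0..t} (lognormal_density \<mu> \<sigma>))
        \<longlongrightarrow> 1 - integral {0..t} (lognormal_density \<mu> \<sigma>)) at_top"
      by (intro tendsto_diff lognormal_cdf_tendsto_1 tendsto_const)
    then show ?thesis
      using tendsto_upperbound[OF _ eventually_mono[OF eventually_ge_at_top[of t] tail]] by simp
  qed
  then show ?thesis
    by (intro exI[of _ "C / 2"]) simp
qed

lemma lognormal_tail_le_inverse_square:
  "\<exists>K. \<forall>t\<ge>0. 1 - integral {0..t} (lognormal_density \<mu> \<sigma>) \<le> K / (1 + t)\<^sup>2"
proof -
  obtain C where C: "\<And>t. 0 < t \<Longrightarrow> 1 - integral {0..t} (lognormal_density \<mu> \<sigma>) \<le> C / t\<^sup>2"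
    using lognormal_tail_le by blast
  define K where "K = 4 + 4 * \<bar>C\<bar>"
  have "1 - integral {0..t} (lognormal_density \<mu> \<sigma>) \<le> K / (1 + t)\<^sup>2" if "0 \<le> t" for t
  proof (cases "t \<le> 1")
    case True
    have "(1 + t)\<^sup>2 \<le> 2\<^sup>2"
      using True that by (intro power_mono) auto
    then have "1 \<le> K / (1 + t)\<^sup>2"
      using that by (simp add: K_def le_divide_eq)
    then show ?thesis
      using integral_lognormal_density_nonneg[of 0 t] by simp
  next
    case False
    have "(1 + t)\<^sup>2 \<le> (2 * t)\<^sup>2"
      using False by (intro power_mono) auto
    then have "4 * \<bar>C\<bar> / (4 * t\<^sup>2) \<le> 4 * \<bar>C\<bar> / (1 + t)\<^sup>2"
      using False by (intro divide_left_mono) (auto simp: power_mult_distrib)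
    moreover have "4 * \<bar>C\<bar> / (1 + t)\<^sup>2 \<le> K / (1 + t)\<^sup>2"
      by (intro divide_right_mono) (auto simp: K_def)
    moreover have "C / t\<^sup>2 \<le> \<bar>C\<bar> / t\<^sup>2"
      by (intro divide_right_mono) auto
    ultimately have "C / t\<^sup>2 \<le> K / (1 + t)\<^sup>2"
      by simp
    then show ?thesis
      using C[of t] False by simp
  qed
  then show ?thesis
    by blast
qed

lemma lognormal_finite_mean:
  "\<exists>K. \<forall>T\<ge>0. integral {0..T} (\<lambda>t. 1 - integral {0..t} (lognormal_density \<mu> \<sigma>)) \<le> K"
proof -
  obtain K where K: "\<And>t. 0 \<le> t \<Longrightarrow> 1 - integral {0..t} (lognormal_density \<mu> \<sigma>) \<le> K / (1 + t)\<^sup>2"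
    using lognormal_tail_le_inverse_square by blast
  have "integral {0..T} (\<lambda>t. 1 - integral {0..t} (lognormal_density \<mu> \<sigma>)) \<le> K" if "0 \<le> T" for T
  proof -
    note inverse_square = has_integral_inverse_square_shift[OF that, of K]
    have "integral {0..T} (\<lambda>t. 1 - integral {0..t} (lognormal_density \<mu> \<sigma>))
        \<le> integral {0..T} (\<lambda>t. K / (1 + t)\<^sup>2)"
      using K
      by (intro integral_le has_integral_integrable[OF inverse_square] integrable_continuous_interval
          continuous_intros indefinite_integral_continuous_1 integrable_lognormal_density) auto
    also have "\<dots> = K - K / (1 + T)"
      by (rule integral_unique[OF inverse_square])
    also have "\<dots> \<le> K"
      using K[of 0] that integral_lognormal_density_nonneg[of 0 0] by simp
    finally show ?thesis .
  qed
  then show ?thesis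
    by blast
qed

lemma memory_kernel_lognormal: "memory_kernel (lognormal_density \<mu> \<sigma>)"
  by unfold_locales
    (auto simp: continuous_lognormal_density lognormal_density_nonneg lognormal_density_eq_0
      lognormal_cdf_less_1 lognormal_finite_mean)

end

section \<open>The SI system with memory\<close>

locale SI_model = memory_kernel +
  fixes M b I0 :: real
  assumes M_pos: "0 < M" and b_pos: "0 < b" and I0_pos: "0 < I0" and I0_less_M: "I0 < M"
begin

definition I_solution :: "(real \<Rightarrow> real) \<Rightarrow> bool" where
  "I_solution h \<longleftrightarrow> h 0 = I0 \<and>
     (\<forall>t\<ge>0. (h has_real_derivative b * (M - h t) * force g h t) (at t within {0..}))"

context
  fixes h :: "real \<Rightarrow> real" and T :: real
  assumes init: "h 0 = I0"
    and deriv: "\<And>t. t \<in> {0..T} \<Longrightarrow>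
      (h has_real_derivative b * (M - h t) * force g h t) (at t within {0..T})"
begin

lemma continuous_on_solution: "continuous_on {0..T} h"
  using deriv by (intro has_derivative_continuous_on) (auto simp: has_field_derivative_def)

lemma solution_complement_explicit:
  assumes "t \<in> {0..T}"
  shows "M - h t = (M - I0) * exp (- (b * integral {0..t} (force g h)))"
proof -
  have sub: "{0..t} \<subseteq> {0..T}"
    using assms by auto
  have "M - h t = (M - h 0) * exp (- integral {0..t} (\<lambda>s. b * force g h s))"
  proof (rule linear_ode_explicit)
    show "continuous_on {0..t} (\<lambda>s. b * force g h s)"
      by (intro continuous_intros continuous_on_force continuous_on_subset[OF continuous_on_solution sub])
    fix s assume "s \<in> {0..t}"
    then have "(h has_real_derivative b * (M - h s) * force g h s) (at s within {0..t})"
      using sub by (intro DERIV_subset[OF deriv sub]) auto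
    then show "((\<lambda>s. M - h s) has_real_derivative - (b * force g h s) * (M - h s)) (at s within {0..t})"
      by (auto intro!: derivative_eq_intros simp: algebra_simps)
  qed (use assms in auto)
  then show ?thesis
    by (simp add: init)
qed

lemma solution_less_M:
  assumes "t \<in> {0..T}"
  shows "h t < M"
proof -
  have "0 < (M - I0) * exp (- (b * integral {0..t} (force g h)))"
    using I0_less_M by simp
  then show ?thesis
    using solution_complement_explicit[OF assms] by linarith
qed

text \<open>At a first zero \<open>t1\<close> of the force, \<open>h\<close> has been nondecreasing on \<open>[0, t1]\<close>, so
  \<open>conv h t1 \<le> h t1 * cdf t1 < h t1\<close>.\<close>
lemma solution_force_pos: "t \<in> {0..T} \<Longrightarrow> 0 < force g h t"
proof (rule ccontr)
  assume t: "t \<in> {0..T}" "\<not> 0 < force g h t"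
  have "continuous_on {0..t} (force g h)"
    using t by (intro continuous_on_force continuous_on_subset[OF continuous_on_solution]) auto
  then obtain t1 where t1: "t1 \<in> {0<..t}" "force g h t1 = 0"
      and before: "\<And>s. s \<in> {0..<t1} \<Longrightarrow> 0 < force g h s"
    using first_zero_real[of 0 t "force g h" t] t init I0_pos by (auto simp: force_eq_conv)
  have sub: "{0..t1} \<subseteq> {0..T}"
    using t t1 by auto
  have "mono_on {0..t1} h"
  proof (rule mono_on_if_has_real_derivative_nonneg)
    fix s assume s: "s \<in> {0..t1}"
    show "(h has_real_derivative b * (M - h s) * force g h s) (at s within {0..t1})"
      using s sub by (intro DERIV_subset[OF deriv sub]) auto
    have "0 \<le> force g h s"
      using before[of s] s t1(2) by (cases "s = t1") auto
    then show "0 \<le> b * (M - h s) * force g h s"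
      using b_pos solution_less_M[of s] s sub by auto
  qed
  then have bounds: "I0 \<le> h s \<and> h s \<le> h t1" if "s \<in> {0..t1}" for s
    using that init t1 by (auto intro!: mono_onD[of "{0..t1}" h])
  have "conv h t1 \<le> h t1 * cdf t1"
    using abs_conv_le[of t1 h "h t1"] bounds I0_pos sub
    by (force intro: continuous_on_subset[OF continuous_on_solution])
  moreover have "0 < h t1 * (1 - cdf t1)"
    using bounds[of t1] t1 I0_pos cdf_less_1[of t1] by auto
  ultimately have "0 < force g h t1"
    by (simp add: force_eq_conv algebra_simps)
  with t1 show False
    by simp
qed

lemma mono_on_solution: "mono_on {0..T} h"
proof (rule mono_on_if_has_real_derivative_nonneg[OF deriv])
  fix t assume "t \<in> {0..T}"
  then show "0 \<le> b * (M - h t) * force g h t"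
    using solution_force_pos solution_less_M b_pos by (simp add: less_imp_le)
qed

lemma solution_ge_I0: "t \<in> {0..T} \<Longrightarrow> I0 \<le> h t"
  using mono_onD[OF mono_on_solution, of 0 t] init by auto

end

lemma I_solution_restrict:
  "I_solution h \<Longrightarrow> t \<in> {0..T} \<Longrightarrow>
    (h has_real_derivative b * (M - h t) * force g h t) (at t within {0..T})"
  unfolding I_solution_def by (auto intro: DERIV_subset)

lemma I_solution_bounds: "I_solution h \<Longrightarrow> 0 \<le> t \<Longrightarrow> I0 \<le> h t \<and> h t < M"
  using solution_ge_I0[of h t t] solution_less_M[of h t t] I_solution_restrict
  by (auto simp: I_solution_def)

lemma I_solution_mono:
  assumes "I_solution h"
  shows "mono_on {0..} h"
proof (rule mono_onI)
  fix s t :: real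
  assume "s \<in> {0..}" "t \<in> {0..}" "s \<le> t"
  moreover have "mono_on {0..t} h"
    using assms by (intro mono_on_solution[of h t] I_solution_restrict) (auto simp: I_solution_def)
  ultimately show "h s \<le> h t"
    by (intro mono_onD[OF \<open>mono_on {0..t} h\<close>]) auto
qed

lemma I_solution_continuous: "I_solution h \<Longrightarrow> continuous_on {0..} h"
  using continuous_on_solution[of h] I_solution_restrict
  by (intro continuous_on_atLeast_if_Icc) (auto simp: I_solution_def)

lemma I_solution_complement_explicit:
  "I_solution h \<Longrightarrow> 0 \<le> t \<Longrightarrow>
    M - h t = (M - I0) * exp (- (b * integral {0..t} (force g h)))"
  using solution_complement_explicit[of h t t] I_solution_restrict
  by (auto simp: I_solution_def)

lemma I_solution_limit:
  assumes h: "I_solution h"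
  obtains L where "(h \<longlongrightarrow> L) at_top" "L < M"
proof -
  obtain K where K: "\<And>T. 0 \<le> T \<Longrightarrow> integral {0..T} (\<lambda>t. 1 - cdf t) \<le> K"
    using kernel_finite_mean unfolding cdf_def by blast
  define \<delta> where "\<delta> = (M - I0) * exp (- (b * (M * K)))"
  have "h t \<le> M - \<delta>" if "0 \<le> t" for t
  proof -
    have "integral {0..t} (force g h) \<le> M * integral {0..t} (\<lambda>t. 1 - cdf t)"
      using I_solution_bounds[OF h] I0_pos that
      by (intro integral_force_le continuous_on_subset[OF I_solution_continuous[OF h]])
         (auto intro: less_imp_le order_trans[OF less_imp_le[OF I0_pos]])
    also have "\<dots> \<le> M * K"
      using K[OF that] M_pos by simp
    finally have "\<delta> \<le> M - h t"
      unfolding I_solution_complement_explicit[OF h that] \<delta>_def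
      using I0_less_M b_pos by (intro mult_left_mono) auto
    then show ?thesis
      by simp
  qed
  then obtain L where "(h \<longlongrightarrow> L) at_top" "L \<le> M - \<delta>"
    using mono_on_tendsto_at_top[OF I_solution_mono[OF h]] by blast
  moreover have "0 < \<delta>"
    using I0_less_M by (simp add: \<delta>_def)
  ultimately show ?thesis
    using that by simp
qed

definition clip :: "real \<Rightarrow> real" where
  "clip x = max 0 (min M x)"

definition truncated_rate :: "(real \<Rightarrow> real) \<Rightarrow> real \<Rightarrow> real" where
  "truncated_rate v t = b * (M - clip (v t)) * force g (\<lambda>s. clip (v s)) t"

definition picard :: "(real \<Rightarrow> real) \<Rightarrow> real \<Rightarrow> real" where
  "picard v t = I0 + integral {0..t} (truncated_rate v)"

lemma clip_bounds: "0 \<le> clip x" "clip x \<le> M"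
  using M_pos by (auto simp: clip_def)

lemma clip_lipschitz: "\<bar>clip x - clip y\<bar> \<le> \<bar>x - y\<bar>"
  by (auto simp: clip_def)

lemma clip_id: "0 \<le> x \<Longrightarrow> x \<le> M \<Longrightarrow> clip x = x"
  by (simp add: clip_def)

lemma continuous_on_clip [continuous_intros]:
  "continuous_on S f \<Longrightarrow> continuous_on S (\<lambda>x. clip (f x))"
  unfolding clip_def by (intro continuous_intros)

lemma truncated_rate_eq:
  assumes "0 \<le> t" "\<And>s. s \<in> {0..t} \<Longrightarrow> 0 \<le> v s \<and> v s \<le> M"
  shows "truncated_rate v t = b * (M - v t) * force g v t"
  using assms clip_id force_cong[of t "\<lambda>s. clip (v s)" v] by (simp add: truncated_rate_def)

lemma continuous_on_truncated_rate:
  "continuous_on {0..} v \<Longrightarrow> continuous_on {0..} (truncated_rate v)"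
  unfolding truncated_rate_def[abs_def]
  by (intro continuous_intros continuous_on_force_atLeast)

lemma conv_clip_bounds:
  assumes v: "continuous_on {0..} v" and "0 \<le> t"
  shows "0 \<le> conv (\<lambda>s. clip (v s)) t" "conv (\<lambda>s. clip (v s)) t \<le> M"
proof -
  have cv: "continuous_on {0..t} (\<lambda>s. clip (v s))"
    by (intro continuous_intros continuous_on_subset[OF v]) auto
  show "0 \<le> conv (\<lambda>s. clip (v s)) t"
    using cv clip_bounds by (intro conv_nonneg)
  have "conv (\<lambda>s. clip (v s)) t \<le> M * cdf t"
    using abs_conv_le[OF cv, of M] clip_bounds by auto
  also have "\<dots> \<le> M"
    using cdf_le_1[OF \<open>0 \<le> t\<close>] M_pos by simp
  finally show "conv (\<lambda>s. clip (v s)) t \<le> M" .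
qed

lemma abs_truncated_rate_le:
  assumes v: "continuous_on {0..} v" and "0 \<le> t"
  shows "\<bar>truncated_rate v t\<bar> \<le> b * M * M"
proof -
  have "\<bar>force g (\<lambda>s. clip (v s)) t\<bar> \<le> M" "\<bar>M - clip (v t)\<bar> \<le> M"
    using conv_clip_bounds[OF assms] clip_bounds[of "v t"] by (auto simp: force_eq_conv)
  then show ?thesis
    unfolding truncated_rate_def abs_mult using b_pos by (simp add: mult_mono mult.assoc)
qed

lemma truncated_rate_lipschitz:
  assumes v: "continuous_on {0..} v" and w: "continuous_on {0..} w" and "0 \<le> t"
    and dist: "\<And>s. s \<in> {0..t} \<Longrightarrow> \<bar>v s - w s\<bar> \<le> E"
  shows "\<bar>truncated_rate v t - truncated_rate w t\<bar> \<le> 3 * b * M * E"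
proof -
  define x y where "x = clip (v t)" and "y = clip (w t)"
  define A B where "A = conv (\<lambda>s. clip (v s)) t" and "B = conv (\<lambda>s. clip (w s)) t"
  have cv: "continuous_on {0..t} (\<lambda>s. clip (v s))" and cw: "continuous_on {0..t} (\<lambda>s. clip (w s))"
    by (intro continuous_intros continuous_on_subset[OF v] continuous_on_subset[OF w]; auto)+
  have clip_dist: "\<bar>clip (v s) - clip (w s)\<bar> \<le> E" if "s \<in> {0..t}" for s
    using clip_lipschitz[of "v s" "w s"] dist[OF that] by linarith
  then have xy: "\<bar>x - y\<bar> \<le> E" and "0 \<le> E"
    using \<open>0 \<le> t\<close> by (auto simp: x_def y_def intro: order_trans[OF abs_ge_zero])
  have "\<bar>A - B\<bar> \<le> E * cdf t"
    unfolding A_def B_def conv_diff[OF cv cw] by (intro abs_conv_le continuous_intros cv cw clip_dist)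
  also have "\<dots> \<le> E"
    using cdf_le_1[OF \<open>0 \<le> t\<close>] \<open>0 \<le> E\<close> by (intro mult_left_le) auto
  finally have AB: "\<bar>A - B\<bar> \<le> E" .
  have "\<bar>M - x\<bar> \<le> M" "\<bar>y - B\<bar> \<le> M"
    using clip_bounds[of "v t"] clip_bounds[of "w t"] conv_clip_bounds[OF w \<open>0 \<le> t\<close>]
    by (auto simp: x_def y_def B_def)
  then have "\<bar>(M - x) * (x - A) - (M - y) * (y - B)\<bar> \<le> M * (\<bar>x - y\<bar> + \<bar>A - B\<bar>) + M * \<bar>x - y\<bar>"
    by (rule abs_diff_mult_le)
  also have "\<dots> \<le> M * (E + E) + M * E"
    using xy AB M_pos by (intro add_mono mult_left_mono) auto
  also have "\<dots> = 3 * M * E"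
    by (simp add: algebra_simps)
  finally have "\<bar>(M - x) * (x - A) - (M - y) * (y - B)\<bar> \<le> 3 * M * E" .
  moreover have "truncated_rate v t - truncated_rate w t = b * ((M - x) * (x - A) - (M - y) * (y - B))"
    by (simp add: truncated_rate_def force_eq_conv x_def y_def A_def B_def algebra_simps)
  ultimately show ?thesis
    using b_pos by (simp add: abs_mult mult.assoc mult_left_mono)
qed

lemma picard_has_derivative:
  assumes v: "continuous_on {0..} v" and "0 \<le> t"
  shows "(picard v has_real_derivative truncated_rate v t) (at t within {0..})"
proof -
  have "((\<lambda>t. integral {0..t} (truncated_rate v)) has_real_derivative truncated_rate v t)
      (at t within {0..t + 1})"
    using \<open>0 \<le> t\<close>
    by (intro integral_has_real_derivative continuous_on_subset[OF continuous_on_truncated_rate[OF v]]) auto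
  then have "(picard v has_real_derivative truncated_rate v t) (at t within {0..t + 1})"
    unfolding picard_def[abs_def] by (auto intro!: derivative_eq_intros)
  then show ?thesis
    using at_within_atLeast_eq_Icc[of 0 t "t + 1"] \<open>0 \<le> t\<close> by simp
qed

lemma continuous_on_picard: "continuous_on {0..} v \<Longrightarrow> continuous_on {0..} (picard v)"
  using picard_has_derivative
  by (intro has_derivative_continuous_on) (auto simp: has_field_derivative_def)

lemma integrable_truncated_rate:
  "continuous_on {0..} v \<Longrightarrow> truncated_rate v integrable_on {0..t}"
  by (intro integrable_continuous_interval continuous_on_subset[OF continuous_on_truncated_rate]) auto

lemma abs_picard_le:
  assumes v: "continuous_on {0..} v" and "0 < r" "0 \<le> t"
  shows "\<bar>picard v t\<bar> \<le> (I0 + b * M * M / r) * exp (r * t)"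
proof -
  have "\<bar>integral {0..t} (truncated_rate v)\<bar> \<le> b * M * M * exp (r * t) / r"
  proof (rule abs_integral_le_exp_bound[OF \<open>0 < r\<close> \<open>0 \<le> t\<close> integrable_truncated_rate[OF v]])
    fix s assume "s \<in> {0..t}"
    then have "\<bar>truncated_rate v s\<bar> \<le> b * M * M" "1 \<le> exp (r * s)"
      using abs_truncated_rate_le[OF v] \<open>0 < r\<close> by auto
    then show "\<bar>truncated_rate v s\<bar> \<le> b * M * M * exp (r * s)"
      using b_pos M_pos by (smt (verit) mult_le_cancel_left1 mult_pos_pos)
  qed
  moreover have "I0 \<le> I0 * exp (r * t)"
    using I0_pos \<open>0 < r\<close> \<open>0 \<le> t\<close> by simp
  moreover have "\<bar>picard v t\<bar> \<le> I0 + \<bar>integral {0..t} (truncated_rate v)\<bar>"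
    unfolding picard_def using I0_pos abs_triangle_ineq[of I0] by simp
  ultimately have "\<bar>picard v t\<bar> \<le> I0 * exp (r * t) + b * M * M * exp (r * t) / r"
    by linarith
  then show ?thesis
    by (simp only: distrib_right times_divide_eq_left)
qed

lemma picard_lipschitz:
  assumes v: "continuous_on {0..} v" and w: "continuous_on {0..} w" and "0 < r" "0 \<le> t"
    and dist: "\<And>s. s \<in> {0..t} \<Longrightarrow> \<bar>v s - w s\<bar> \<le> D * exp (r * s)"
  shows "\<bar>picard v t - picard w t\<bar> \<le> 3 * b * M * D * exp (r * t) / r"
proof -
  have bound: "\<bar>truncated_rate v s - truncated_rate w s\<bar> \<le> 3 * b * M * D * exp (r * s)"
    if "s \<in> {0..t}" for s
  proof (rule order_trans[OF truncated_rate_lipschitz[OF v w]])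
    show "\<bar>v s' - w s'\<bar> \<le> D * exp (r * s)" if "s' \<in> {0..s}" for s'
    proof -
      have "0 \<le> D"
        using dist[of 0] \<open>0 \<le> t\<close> by (auto intro: order_trans[OF abs_ge_zero])
      then have "D * exp (r * s') \<le> D * exp (r * s)"
        using that \<open>0 < r\<close> by (intro mult_left_mono) auto
      then show ?thesis
        using dist[of s'] that \<open>s \<in> {0..t}\<close> by auto
    qed
  qed (use that in \<open>auto simp: mult.assoc\<close>)
  have "picard v t - picard w t = integral {0..t} (\<lambda>s. truncated_rate v s - truncated_rate w s)"
    unfolding picard_def
    using Henstock_Kurzweil_Integration.integral_diff[OF integrable_truncated_rate[OF v]
        integrable_truncated_rate[OF w]]
    by simp
  also have "\<bar>\<dots>\<bar> \<le> 3 * b * M * D * exp (r * t) / r"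
    by (rule abs_integral_le_exp_bound[OF \<open>0 < r\<close> \<open>0 \<le> t\<close>
          integrable_diff[OF integrable_truncated_rate[OF v] integrable_truncated_rate[OF w]] bound])
  finally show ?thesis .
qed

lemma weighted_contraction_picard: "weighted_contraction picard (6 * b * M) (1 / 2)"
proof
  have r: "0 < 6 * b * M"
    using b_pos M_pos by simp
  show "0 \<le> (1 / 2 :: real)" "(1 / 2 :: real) < 1"
    by simp_all
  show "continuous_on {0..} (picard v)" if "continuous_on {0..} v" for v
    using continuous_on_picard[OF that] .
  show "\<exists>C. \<forall>t\<ge>0. \<bar>picard v t\<bar> \<le> C * exp (6 * b * M * t)" if "continuous_on {0..} v" for v
    using abs_picard_le[OF that r] by blast
  show "\<bar>picard v t - picard w t\<bar> \<le> 1 / 2 * D * exp (6 * b * M * t)"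
    if "continuous_on {0..} v" "continuous_on {0..} w" "0 \<le> t"
      and "\<And>s. s \<in> {0..t} \<Longrightarrow> \<bar>v s - w s\<bar> \<le> D * exp (6 * b * M * s)" for v w t D
    using picard_lipschitz[OF that(1,2) r that(3,4)] b_pos M_pos by (simp add: field_simps)
qed

lemma picard_fixed_has_derivative:
  assumes v: "continuous_on {0..} v" and fixed: "\<And>t. 0 \<le> t \<Longrightarrow> picard v t = v t" and "0 \<le> t"
  shows "(v has_real_derivative truncated_rate v t) (at t within {0..})"
  using picard_has_derivative[OF v \<open>0 \<le> t\<close>]
  by (rule has_field_derivative_transform_within[where d = 1]) (use fixed \<open>0 \<le> t\<close> in auto)

text \<open>Up to its first exit time from \<open>(0, M)\<close>, a fixed point of the truncated Picard operator
  solves the untruncated equation, which keeps it inside \<open>[I0, M)\<close>.\<close>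
lemma picard_fixed_bounds:
  assumes v: "continuous_on {0..} v" and fixed: "\<And>t. 0 \<le> t \<Longrightarrow> picard v t = v t" and "0 \<le> t"
  shows "0 < v t \<and> v t < M"
proof (rule ccontr)
  assume out: "\<not> (0 < v t \<and> v t < M)"
  have v0: "v 0 = I0"
    using fixed[of 0] by (simp add: picard_def)
  define f where "f s = min (v s) (M - v s)" for s
  have "continuous_on {0..t} f"
    unfolding f_def by (intro continuous_intros continuous_on_subset[OF v]) auto
  moreover have "0 < f 0"
    using v0 I0_pos I0_less_M by (simp add: f_def)
  moreover have "t \<in> {0..t}" "f t \<le> 0"
    using \<open>0 \<le> t\<close> out by (auto simp: f_def)
  ultimately obtain t1 where t1: "t1 \<in> {0<..t}" "f t1 = 0"
      and before: "\<And>s. s \<in> {0..<t1} \<Longrightarrow> 0 < f s"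
    by (rule first_zero_real) blast
  have bounds: "0 \<le> v s \<and> v s \<le> M" if "s \<in> {0..t1}" for s
    using before[of s] t1(2) that by (cases "s = t1") (auto simp: f_def)
  have "(v has_real_derivative b * (M - v s) * force g v s) (at s within {0..t1})"
    if "s \<in> {0..t1}" for s
    using picard_fixed_has_derivative[OF v fixed, of s] truncated_rate_eq[of s v] bounds that
    by (auto intro: DERIV_subset)
  then have "I0 \<le> v t1 \<and> v t1 < M"
    using solution_ge_I0[of v t1 t1] solution_less_M[of v t1 t1] v0 t1 by auto
  with t1 I0_pos show False
    by (auto simp: f_def)
qed

lemma I_solution_if_picard_fixed:
  assumes v: "continuous_on {0..} v" and fixed: "\<And>t. 0 \<le> t \<Longrightarrow> picard v t = v t"
  shows "I_solution v"
proof -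
  have "truncated_rate v t = b * (M - v t) * force g v t" if "0 \<le> t" for t
    using picard_fixed_bounds[OF v fixed] that by (intro truncated_rate_eq) (auto simp: less_imp_le)
  then show ?thesis
    unfolding I_solution_def using picard_fixed_has_derivative[OF v fixed] fixed[of 0]
    by (auto simp: picard_def)
qed

lemma picard_fixed_if_I_solution:
  assumes h: "I_solution h" and "0 \<le> t"
  shows "picard h t = h t"
proof -
  have "(truncated_rate h has_integral h t - h 0) {0..t}"
  proof (rule fundamental_theorem_of_calculus[OF \<open>0 \<le> t\<close>])
    fix s assume s: "s \<in> {0..t}"
    have "truncated_rate h s = b * (M - h s) * force g h s"
      using s I_solution_bounds[OF h] I0_pos by (intro truncated_rate_eq) (auto intro: less_imp_le order_trans)
    then show "(h has_vector_derivative truncated_rate h s) (at s within {0..t})"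
      using I_solution_restrict[OF h s] by (simp add: has_real_derivative_iff_has_vector_derivative)
  qed
  then show ?thesis
    using h by (simp add: picard_def I_solution_def integral_unique)
qed

theorem I_solution_exists: "\<exists>h. I_solution h"
  using weighted_contraction.fixed_point_exists[OF weighted_contraction_picard]
    I_solution_if_picard_fixed by blast

theorem I_solution_unique:
  assumes h: "I_solution h" and h': "I_solution h'" and "0 \<le> t"
  shows "h t = h' t"
proof -
  have growth: "\<bar>u s\<bar> \<le> M * exp (6 * b * M * s)" if u: "I_solution u" and "0 \<le> s" for u s
  proof -
    have "\<bar>u s\<bar> \<le> M"
      using I_solution_bounds[OF u \<open>0 \<le> s\<close>] I0_pos by simp
    also have "\<dots> \<le> M * exp (6 * b * M * s)"
      using M_pos b_pos \<open>0 \<le> s\<close> by simp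
    finally show ?thesis .
  qed
  show ?thesis
    using weighted_contraction.fixed_point_unique[OF weighted_contraction_picard,
        OF I_solution_continuous[OF h] picard_fixed_if_I_solution[OF h] growth[OF h]
          I_solution_continuous[OF h'] picard_fixed_if_I_solution[OF h'] growth[OF h'] \<open>0 \<le> t\<close>] .
qed

lemma is_C1_solution_iff:
  "is_C1_solution M b g S0 I0 S h \<longleftrightarrow> I_solution h \<and> S 0 = S0 \<and>
    (\<forall>t\<ge>0. (S has_real_derivative - b * S t * force g h t) (at t within {0..}))"
proof
  assume "is_C1_solution M b g S0 I0 S h"
  then show "I_solution h \<and> S 0 = S0 \<and>
      (\<forall>t\<ge>0. (S has_real_derivative - b * S t * force g h t) (at t within {0..}))"
    unfolding is_C1_solution_def I_solution_def by auto
next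
  assume sol: "I_solution h \<and> S 0 = S0 \<and>
    (\<forall>t\<ge>0. (S has_real_derivative - b * S t * force g h t) (at t within {0..}))"
  then have "continuous_on {0..} S" "continuous_on {0..} h"
    using I_solution_continuous
    by (auto intro!: has_derivative_continuous_on simp: has_field_derivative_def)
  then show "is_C1_solution M b g S0 I0 S h"
    unfolding is_C1_solution_def using sol
    by (intro conjI exI[of _ "\<lambda>t. - b * S t * force g h t"] exI[of _ "\<lambda>t. b * (M - h t) * force g h t"])
       (auto intro!: continuous_intros continuous_on_force_atLeast simp: I_solution_def)
qed

lemma is_C1_solution_complement:
  assumes "I_solution h"
  shows "is_C1_solution M b g (M - I0) I0 (\<lambda>t. M - h t) h"
  using assms unfolding is_C1_solution_iff
  by (auto simp: I_solution_def intro!: derivative_eq_intros)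

lemma is_C1_solution_unique:
  assumes sol: "is_C1_solution M b g (M - I0) I0 S h'" and h: "I_solution h" and "0 \<le> t"
  shows "S t = M - h t \<and> h' t = h t"
proof -
  have h': "I_solution h'" and S0: "S 0 = M - I0"
    and dS: "\<And>t. 0 \<le> t \<Longrightarrow> (S has_real_derivative - b * S t * force g h' t) (at t within {0..})"
    using sol unfolding is_C1_solution_iff by auto
  have "S t = S 0 * exp (- integral {0..t} (\<lambda>s. b * force g h' s))"
  proof (rule linear_ode_explicit[OF \<open>0 \<le> t\<close>])
    show "continuous_on {0..t} (\<lambda>s. b * force g h' s)"
      by (intro continuous_intros continuous_on_force continuous_on_subset[OF I_solution_continuous[OF h']]) auto
    show "(S has_real_derivative - (b * force g h' s) * S s) (at s within {0..t})" if "s \<in> {0..t}" for s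
      using dS[of s] that by (auto intro: DERIV_subset simp: algebra_simps)
  qed
  also have "\<dots> = M - h' t"
    using I_solution_complement_explicit[OF h' \<open>0 \<le> t\<close>] S0 by simp
  finally show ?thesis
    using I_solution_unique[OF h' h \<open>0 \<le> t\<close>] by simp
qed

end

theorem theorem3p1:
  fixes M b S0 I0 \<mu> \<sigma> :: real
  assumes "M > 0" and "b > 0"
    and "0 < I0" and "I0 < M" and "0 < S0" and "S0 < M" and "S0 + I0 = M"
    and "\<sigma> > 0"
  shows "\<exists>S I. is_C1_solution M b (lognormal_density \<mu> \<sigma>) S0 I0 S I
           \<and> (\<forall>S2 I2. is_C1_solution M b (lognormal_density \<mu> \<sigma>) S0 I0 S2 I2 \<longrightarrow>
                   (\<forall>t\<ge>0. S2 t = S t \<and> I2 t = I t))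
           \<and> (\<forall>t\<ge>0. 0 < S t \<and> S t < M \<and> 0 < I t \<and> I t < M)
           \<and> antimono_on {0..} S \<and> mono_on {0..} I
           \<and> (\<exists>Sinf. Sinf > 0 \<and> (S \<longlongrightarrow> Sinf) at_top)
           \<and> (\<exists>Iinf. Iinf < M \<and> (I \<longlongrightarrow> Iinf) at_top)"
proof -
  interpret SI_model "lognormal_density \<mu> \<sigma>" M b I0
    using assms memory_kernel_lognormal[OF \<open>\<sigma> > 0\<close>]
    by (simp add: SI_model_def SI_model_axioms_def)
  obtain I where I: "I_solution I"
    using I_solution_exists by blast
  obtain L where L: "(I \<longlongrightarrow> L) at_top" "L < M"
    using I_solution_limit[OF I] by blast
  have S0: "S0 = M - I0"
    using assms(7) by simp
  show ?thesis
    unfolding S0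
  proof (rule exI[of _ "\<lambda>t. M - I t"], rule exI[of _ I], intro conjI)
    show "is_C1_solution M b (lognormal_density \<mu> \<sigma>) (M - I0) I0 (\<lambda>t. M - I t) I"
      by (rule is_C1_solution_complement[OF I])
    show "\<forall>S2 I2. is_C1_solution M b (lognormal_density \<mu> \<sigma>) (M - I0) I0 S2 I2 \<longrightarrow>
        (\<forall>t\<ge>0. S2 t = M - I t \<and> I2 t = I t)"
      using is_C1_solution_unique[OF _ I] by blast
    show "\<forall>t\<ge>0. 0 < M - I t \<and> M - I t < M \<and> 0 < I t \<and> I t < M"
      using I_solution_bounds[OF I] I0_pos by fastforce
    show "antimono_on {0..} (\<lambda>t. M - I t)" "mono_on {0..} I"
      using I_solution_mono[OF I] by (auto simp: monotone_on_def)
    show "\<exists>Sinf>0. ((\<lambda>t. M - I t) \<longlongrightarrow> Sinf) at_top"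
      using L by (intro exI[of _ "M - L"]) (auto intro: tendsto_intros)
    show "\<exists>Iinf<M. (I \<longlongrightarrow> Iinf) at_top"
      using L by blast
  qed
qed

end
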